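(* Let $G$ be a graph and let $\{e_1,e_2\}$ be a $2$-edge-cut in $G$. Suppose that $\{e_1,f_1,f_2\}$ is a $3$-edge-cut in $G$. Then $\{e_2,f_1,f_2\}$ is a $3$-edge-cut in $G$ as well.
   Context: Graphs may have parallel edges but no loops. A $k$-edge-cut is an inclusion-minimal edge cut of size $k$: a set of $k$ edges whose removal increases the number of connected components of $G$, such that no proper subset has this property. *)

theory Defs
  imports Main
begin

text \<open>A finite multigraph (parallel edges allowed, no loops): vertex set V, edge set E
  (edges are abstract identifiers), and an endpoint map; each edge has exactly two
  distinct endpoints in V.\<close>
definition multigraph :: "'v set \<Rightarrow> 'e set \<Rightarrow> ('e \<Rightarrow> 'v set) \<Rightarrow> bool" where
  "multigraph V E ends \<longleftrightarrow> finite V \<and> finite E \<and>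
     (\<forall>e\<in>E. \<exists>u v. u \<in> V \<and> v \<in> V \<and> u \<noteq> v \<and> ends e = {u, v})"

definition edge_step :: "'e set \<Rightarrow> ('e \<Rightarrow> 'v set) \<Rightarrow> 'v \<Rightarrow> 'v \<Rightarrow> bool" where
  "edge_step F ends u v \<longleftrightarrow> (\<exists>e\<in>F. ends e = {u, v})"

definition components :: "'v set \<Rightarrow> 'e set \<Rightarrow> ('e \<Rightarrow> 'v set) \<Rightarrow> 'v set set" where
  "components V F ends = (\<lambda>u. {w \<in> V. (edge_step F ends)\<^sup>*\<^sup>* u w}) ` V"

definition num_components :: "'v set \<Rightarrow> 'e set \<Rightarrow> ('e \<Rightarrow> 'v set) \<Rightarrow> nat" where
  "num_components V F ends = card (components V F ends)"

definition is_edge_cut :: "'v set \<Rightarrow> 'e set \<Rightarrow> ('e \<Rightarrow> 'v set) \<Rightarrow> 'e set \<Rightarrow> bool" where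
  "is_edge_cut V E ends C \<longleftrightarrow>
     C \<subseteq> E \<and> num_components V (E - C) ends > num_components V E ends"

definition is_k_edge_cut :: "nat \<Rightarrow> 'v set \<Rightarrow> 'e set \<Rightarrow> ('e \<Rightarrow> 'v set) \<Rightarrow> 'e set \<Rightarrow> bool" where
  "is_k_edge_cut k V E ends C \<longleftrightarrow>
     is_edge_cut V E ends C \<and> card C = k \<and> (\<forall>D. D \<subset> C \<longrightarrow> \<not> is_edge_cut V E ends D)"

end

theory Submission
  imports Defs
begin

text \<open>Every edge cut contains a nonempty edge boundary \<open>\<delta>(X)\<close>, the set of edges with
  exactly one end in \<open>X\<close>, and a minimal edge cut is such a boundary. Boundaries are closed
  under symmetric difference: \<open>\<delta>(X \<triangle> Y) = \<delta>(X) \<triangle> \<delta>(Y)\<close>. Writing \<open>{e1, e2} = \<delta>(X)\<close> and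
  \<open>{e1, f1, f2} = \<delta>(Y)\<close>, the set \<open>{e2, f1, f2}\<close> is \<open>\<delta>(X \<triangle> Y)\<close>, hence a cut. If a proper
  subset \<open>D\<close> of it were a cut, containing some \<open>\<delta>(Z) \<noteq> {}\<close>, then \<open>\<delta>(Z)\<close> or \<open>\<delta>(X \<triangle> Z)\<close>
  would be a nonempty boundary properly inside \<open>{e1, f1, f2}\<close>, contradicting minimality.\<close>

abbreviation reachable :: "'e set \<Rightarrow> ('e \<Rightarrow> 'v set) \<Rightarrow> 'v \<Rightarrow> 'v \<Rightarrow> bool" where
  "reachable F ends \<equiv> (edge_step F ends)\<^sup>*\<^sup>*"

lemma multigraph_ends_doubleton:
  "multigraph V E ends \<Longrightarrow> e \<in> E \<Longrightarrow> \<exists>u v. u \<in> V \<and> v \<in> V \<and> ends e = {u, v}"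
  unfolding multigraph_def by blast

lemma reachable_sym: "reachable F ends u v \<Longrightarrow> reachable F ends v u"
  using symp_rtranclp[of "edge_step F ends"]
  by (auto simp: symp_def edge_step_def insert_commute)

lemma reachable_edge: "e \<in> F \<Longrightarrow> ends e = {u, v} \<Longrightarrow> reachable F ends u v"
  by (rule r_into_rtranclp) (auto simp: edge_step_def)

lemma reachable_mono: "F \<subseteq> F' \<Longrightarrow> reachable F ends u v \<Longrightarrow> reachable F' ends u v"
  by (rule mono_rtranclp[rule_format]) (auto simp: edge_step_def)

lemma reachable_Diff_eq:
  assumes "\<And>e u v. e \<in> C \<Longrightarrow> ends e = {u, v} \<Longrightarrow> reachable (E - C) ends u v"
  shows "reachable E ends = reachable (E - C) ends"
proof (rule rtranclp_subset)
  show "edge_step (E - C) ends \<le> edge_step E ends"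
    unfolding edge_step_def by blast
  show "edge_step E ends \<le> reachable (E - C) ends"
  proof (intro predicate2I)
    fix u v assume "edge_step E ends u v"
    then obtain e where "e \<in> E" "ends e = {u, v}" by (auto simp: edge_step_def)
    then show "reachable (E - C) ends u v"
      using assms reachable_edge[of e "E - C"] by (cases "e \<in> C") auto
  qed
qed

lemma card_components_less:
  assumes "finite V" "F' \<subseteq> F" "u \<in> V" "v \<in> V"
    and "reachable F ends u v" "\<not> reachable F' ends u v"
  shows "card (components V F ends) < card (components V F' ends)"
proof -
  define block where "block G w = {x \<in> V. reachable G ends w x}" for G w
  define merge where "merge K = {x \<in> V. \<exists>y\<in>K. reachable F ends y x}" for K
  have components: "components V G ends = block G ` V" for G
    by (simp add: components_def block_def)
  have merge_block: "merge (block F' w) = block F w" if "w \<in> V" for w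
  proof -
    have "reachable F ends w y" if "reachable F' ends w y" for y
      using reachable_mono[OF \<open>F' \<subseteq> F\<close> that] .
    then show ?thesis
      using \<open>w \<in> V\<close> unfolding merge_def block_def by (blast intro: rtranclp_trans)
  qed
  have "block F u = block F v"
    using rtranclp_trans[OF assms(5)] rtranclp_trans[OF reachable_sym[OF assms(5)]]
    unfolding block_def by blast
  moreover have "block F' u \<noteq> block F' v"
    using assms(4,6) unfolding block_def by blast
  ultimately have "\<not> inj_on merge (components V F' ends)"
    using assms(3,4) merge_block unfolding components inj_on_def by (metis imageI)
  moreover have "components V F ends = merge ` components V F' ends"
    using merge_block unfolding components image_image by simp
  moreover have "finite (components V F' ends)"
    using assms(1) by (simp add: components)
  ultimately show ?thesis
    using card_image_le inj_on_iff_eq_card le_neq_implies_less by metis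
qed

definition edge_boundary :: "'e set \<Rightarrow> ('e \<Rightarrow> 'v set) \<Rightarrow> 'v set \<Rightarrow> 'e set" where
  "edge_boundary F ends X = {e \<in> F. ends e \<inter> X \<noteq> {} \<and> ends e - X \<noteq> {}}"

lemma mem_edge_boundary_doubleton:
  "ends e = {u, v} \<Longrightarrow> e \<in> edge_boundary F ends X \<longleftrightarrow> e \<in> F \<and> (u \<in> X \<longleftrightarrow> v \<notin> X)"
  by (auto simp: edge_boundary_def)

lemma edge_boundary_subset: "edge_boundary F ends X \<subseteq> F"
  by (auto simp: edge_boundary_def)

lemma edge_boundary_Diff: "edge_boundary (E - C) ends X = edge_boundary E ends X - C"
  by (auto simp: edge_boundary_def)

lemma edge_boundary_sym_diff:
  assumes "\<forall>e\<in>E. \<exists>u v. ends e = {u, v}"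
  shows "edge_boundary E ends (sym_diff X Y) =
    sym_diff (edge_boundary E ends X) (edge_boundary E ends Y)"
proof (rule set_eqI)
  fix e
  show "e \<in> edge_boundary E ends (sym_diff X Y) \<longleftrightarrow>
      e \<in> sym_diff (edge_boundary E ends X) (edge_boundary E ends Y)"
  proof (cases "e \<in> E")
    case True
    then obtain u v where "ends e = {u, v}" using assms by blast
    then show ?thesis by (auto simp: mem_edge_boundary_doubleton)
  qed (auto simp: edge_boundary_def)
qed

lemma reachable_closed_if_no_boundary:
  assumes "edge_boundary F ends X = {}" "reachable F ends u v" "u \<in> X"
  shows "v \<in> X"
  using assms(2,3)
proof (induction rule: rtranclp_induct)
  case (step w x)
  then obtain e where e: "e \<in> F" "ends e = {w, x}" by (auto simp: edge_step_def)
  have "e \<notin> edge_boundary F ends X" using assms(1) by simp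
  with e step.IH step.prems show ?case by (auto simp: mem_edge_boundary_doubleton)
qed

lemma edge_boundary_reachable_from:
  assumes "\<forall>e\<in>F. \<exists>x y. ends e = {x, y}"
  shows "edge_boundary F ends {w. reachable F ends u w} = {}"
proof -
  have "e \<notin> edge_boundary F ends {w. reachable F ends u w}" if "e \<in> F" for e
  proof -
    obtain x y where xy: "ends e = {x, y}" using assms \<open>e \<in> F\<close> by blast
    have xy_reach: "reachable F ends x y"
      using \<open>e \<in> F\<close> xy by (rule reachable_edge)
    have yx_reach: "reachable F ends y x"
      using xy_reach by (rule reachable_sym)
    show ?thesis
      using xy xy_reach yx_reach by (auto simp: mem_edge_boundary_doubleton intro: rtranclp_trans)
  qed
  then show ?thesis using edge_boundary_subset[of F ends] by blast
qed

lemma edge_cut_if_boundary: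
  assumes mg: "multigraph V E ends" and "C \<subseteq> E"
    and "edge_boundary E ends X \<noteq> {}" "edge_boundary E ends X \<subseteq> C"
  shows "is_edge_cut V E ends C"
proof -
  obtain e where e: "e \<in> edge_boundary E ends X" using assms(3) by blast
  then have "e \<in> E" using edge_boundary_subset[of E ends X] by blast
  then obtain x y where xy: "x \<in> V" "y \<in> V" "ends e = {x, y}"
    using multigraph_ends_doubleton[OF mg] by blast
  have "reachable E ends x y"
    using \<open>e \<in> E\<close> xy(3) by (rule reachable_edge)
  moreover have "\<not> reachable (E - C) ends x y"
  proof
    assume xy_reach: "reachable (E - C) ends x y"
    have "edge_boundary (E - C) ends X = {}"
      using assms(4) by (auto simp: edge_boundary_Diff)
    note inside = reachable_closed_if_no_boundary[OF this]
    have "x \<in> X \<longleftrightarrow> y \<notin> X"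
      using e xy(3) by (simp add: mem_edge_boundary_doubleton)
    then show False
      using inside[OF xy_reach] inside[OF reachable_sym[OF xy_reach]] by blast
  qed
  ultimately show ?thesis
    using card_components_less[of V "E - C" E] mg xy(1,2) \<open>C \<subseteq> E\<close>
    by (auto simp: is_edge_cut_def num_components_def multigraph_def)
qed

lemma boundary_if_edge_cut:
  assumes mg: "multigraph V E ends" and cut: "is_edge_cut V E ends C"
  obtains X where "edge_boundary E ends X \<noteq> {}" "edge_boundary E ends X \<subseteq> C"
proof -
  have CE: "C \<subseteq> E" using cut by (simp add: is_edge_cut_def)
  have "\<exists>e\<in>C. \<exists>u v. ends e = {u, v} \<and> \<not> reachable (E - C) ends u v"
  proof (rule ccontr)
    assume "\<not> ?thesis"
    then have "reachable E ends = reachable (E - C) ends"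
      by (intro reachable_Diff_eq) blast
    then show False
      using cut by (simp add: is_edge_cut_def num_components_def components_def)
  qed
  then obtain e u v where e: "e \<in> C" "ends e = {u, v}" "\<not> reachable (E - C) ends u v"
    by blast
  define X where "X = {w. reachable (E - C) ends u w}"
  have "e \<in> edge_boundary E ends X"
    using e CE by (auto simp: X_def mem_edge_boundary_doubleton)
  moreover have "edge_boundary (E - C) ends X = {}"
    unfolding X_def using multigraph_ends_doubleton[OF mg]
    by (intro edge_boundary_reachable_from) blast
  ultimately show ?thesis
    using that by (auto simp: edge_boundary_Diff)
qed

definition minimal_edge_cut :: "'v set \<Rightarrow> 'e set \<Rightarrow> ('e \<Rightarrow> 'v set) \<Rightarrow> 'e set \<Rightarrow> bool" where
  "minimal_edge_cut V E ends C \<longleftrightarrow>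
     is_edge_cut V E ends C \<and> (\<forall>D. D \<subset> C \<longrightarrow> \<not> is_edge_cut V E ends D)"

lemma is_k_edge_cut_iff:
  "is_k_edge_cut k V E ends C \<longleftrightarrow> minimal_edge_cut V E ends C \<and> card C = k"
  by (auto simp: is_k_edge_cut_def minimal_edge_cut_def)

lemma boundary_psubset_minimal_edge_cut:
  assumes "multigraph V E ends" "minimal_edge_cut V E ends C" "edge_boundary E ends X \<subset> C"
  shows "edge_boundary E ends X = {}"
proof (rule ccontr)
  assume "edge_boundary E ends X \<noteq> {}"
  then have "is_edge_cut V E ends (edge_boundary E ends X)"
    using edge_cut_if_boundary[OF assms(1) edge_boundary_subset] by blast
  with assms(2,3) show False by (simp add: minimal_edge_cut_def)
qed

lemma minimal_edge_cut_is_boundary: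
  assumes mg: "multigraph V E ends" and C: "minimal_edge_cut V E ends C"
  obtains X where "edge_boundary E ends X = C"
proof -
  obtain X where "edge_boundary E ends X \<noteq> {}" "edge_boundary E ends X \<subseteq> C"
    using boundary_if_edge_cut[OF mg] C by (auto simp: minimal_edge_cut_def)
  with boundary_psubset_minimal_edge_cut[OF mg C] that show ?thesis by blast
qed

lemma minimal_edge_cut_exchange:
  assumes mg: "multigraph V E ends"
    and S: "minimal_edge_cut V E ends {e1, e2}"
    and T: "minimal_edge_cut V E ends T" and "e1 \<in> T" "e2 \<notin> T"
  shows "minimal_edge_cut V E ends (insert e2 (T - {e1}))"
proof -
  have doubleton: "\<forall>e\<in>E. \<exists>u v. ends e = {u, v}"
    using multigraph_ends_doubleton[OF mg] by blast
  obtain X where X: "edge_boundary E ends X = {e1, e2}"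
    using minimal_edge_cut_is_boundary[OF mg S] .
  obtain Y where Y: "edge_boundary E ends Y = T"
    using minimal_edge_cut_is_boundary[OF mg T] .
  have "edge_boundary E ends (sym_diff X Y) = sym_diff {e1, e2} T"
    unfolding edge_boundary_sym_diff[OF doubleton] X Y ..
  also have "\<dots> = insert e2 (T - {e1})"
    using assms(4,5) by auto
  finally have "edge_boundary E ends (sym_diff X Y) = insert e2 (T - {e1})" .
  then have cut: "is_edge_cut V E ends (insert e2 (T - {e1}))"
    using edge_cut_if_boundary[OF mg] edge_boundary_subset by (metis insert_not_empty order_refl)
  have "\<not> is_edge_cut V E ends D" if D: "D \<subset> insert e2 (T - {e1})" for D
  proof
    assume "is_edge_cut V E ends D"
    then obtain Z where Z: "edge_boundary E ends Z \<noteq> {}" "edge_boundary E ends Z \<subseteq> D"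
      using boundary_if_edge_cut[OF mg] by blast
    have "e2 \<noteq> e1" using assms(4,5) by blast
    then have "e1 \<notin> D" using D by blast
    have "\<exists>W. edge_boundary E ends W \<noteq> {} \<and> edge_boundary E ends W \<subset> T"
    proof (cases "e2 \<in> edge_boundary E ends Z")
      case True
      obtain t where t: "t \<in> T" "t \<noteq> e1" "t \<notin> D"
        using D True Z(2) by blast
      have "edge_boundary E ends (sym_diff X Z) = insert e1 (edge_boundary E ends Z - {e2})"
        unfolding edge_boundary_sym_diff[OF doubleton] X using True Z(2) \<open>e1 \<notin> D\<close> by blast
      moreover have "insert e1 (edge_boundary E ends Z - {e2}) \<subset> T"
        using Z(2) D t assms(4) by blast
      ultimately show ?thesis by (metis insert_not_empty)
    next
      case False
      then have "edge_boundary E ends Z \<subset> T"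
        using Z(2) D \<open>e1 \<notin> D\<close> assms(4) by blast
      with Z(1) show ?thesis by blast
    qed
    then show False using boundary_psubset_minimal_edge_cut[OF mg T] by blast
  qed
  with cut show ?thesis by (simp add: minimal_edge_cut_def)
qed

theorem lemma4:
  fixes V :: "'v set" and E :: "'e set" and ends :: "'e \<Rightarrow> 'v set"
    and e1 e2 f1 f2 :: 'e
  assumes "multigraph V E ends"
    and "is_k_edge_cut 2 V E ends {e1, e2}"
    and "is_k_edge_cut 3 V E ends {e1, f1, f2}"
  shows "is_k_edge_cut 3 V E ends {e2, f1, f2}"
proof -
  have S: "minimal_edge_cut V E ends {e1, e2}" and "e1 \<noteq> e2"
    using assms(2) by (auto simp: is_k_edge_cut_iff)
  have T: "minimal_edge_cut V E ends {e1, f1, f2}" and "card {e1, f1, f2} = 3"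
    using assms(3) by (auto simp: is_k_edge_cut_iff)
  then have distinct: "e1 \<noteq> f1" "e1 \<noteq> f2" "f1 \<noteq> f2"
    by (auto simp: card_insert_if split: if_splits)
  have "e2 \<notin> {e1, f1, f2}"
  proof
    assume "e2 \<in> {e1, f1, f2}"
    then have "{e1, e2} \<subset> {e1, f1, f2}" using \<open>e1 \<noteq> e2\<close> distinct by auto
    then show False using S T by (auto simp: minimal_edge_cut_def)
  qed
  moreover have "insert e2 ({e1, f1, f2} - {e1}) = {e2, f1, f2}"
    using distinct by auto
  ultimately show ?thesis
    using minimal_edge_cut_exchange[OF assms(1) S T] distinct
    by (auto simp: is_k_edge_cut_iff)
qed

end
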